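(* Let $t\ge1$ be an integer and let $p(\cdot\mid\cdot)$ be the transition probability density on $\mathbb{R}$ given by $$p(\mu_i\mid\mu_{i-1})=c_t\left(1+\frac{\mu_{i-1}^2}{t}\right)^{t/2}\left(1+\frac{\mu_{i-1}^2}{t}+\frac{\mu_i^2}{t}\right)^{-(t+1)/2},$$ where $c_t$ is the normalizing constant (depending only on $t$); equivalently, given $\mu_{i-1}$, the variable $\mu_i(1+\mu_{i-1}^2/t)^{-1/2}$ has the Student t distribution with $t$ degrees of freedom. Let $a>0$, set $$h(a)=\left\{a^2\left[\left(1+\frac{a^2}{t}\right)^{t/(t+1)}-1\right]^{-1}-t\right\}^{1/2},$$ and define the subprobability density $$p_{\min}(\mu)=\begin{cases}p(\mu\mid a)&\text{for }|\mu|\le h(a),\\ p(\mu\mid 0)&\text{for }|\mu|>h(a).\end{cases}$$ Then $|\mu_{i-1}|\le a$ implies $p(\mu_i\mid\mu_{i-1})\ge p_{\min}(\mu_i)$ for all $\mu_i$. Consequently, letting $\nu$ be the probability measure with density $p_{\min}/\beta$, the transition kernel $P$ with density $p(\cdot\mid\cdot)$ satisfies $P(x,\cdot)\ge\beta\mathbf{1}(x\in J)\nu(\cdot)$ for all $x$, with $J=[-a,a]$ and $$\beta=1-\Pr\left(|\vartheta|\le h(a)\right)+\Pr\left(|\vartheta|\le\left(1+\frac{a^2}{t}\right)^{-1/2}h(a)\right),$$ where $\vartheta$ has the Student t distribution with $t$ degrees of freedom.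
   Context: This is the transition density of the $\mu$-marginal of the two-step Gibbs sampler for the posterior of $(\mu,\kappa)$ in a normal model $N(\mu,\kappa^{-1})$ with $t$ observations, prior $p(\mu,\kappa)\propto\kappa^{-1}$, normalized to sample mean $0$ and $s^2=t$. *)

theory Defs
  imports "HOL-Probability.Probability"
begin

text \<open>Since the substitution y = (1 + x^2/t)^(1/2) u shows that the integral of the
  unnormalized density does not depend on x, we normalize at x = 0.\<close>
definition gibbs_const :: "nat \<Rightarrow> real" where
  "gibbs_const t =
     1 / (\<integral>y. (1 + y\<^sup>2 / real t) powr (-(real t + 1) / 2) \<partial>lborel)"

definition gibbs_p :: "nat \<Rightarrow> real \<Rightarrow> real \<Rightarrow> real" where
  "gibbs_p t x y = gibbs_const t * (1 + x\<^sup>2 / real t) powr (real t / 2)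
      * (1 + x\<^sup>2 / real t + y\<^sup>2 / real t) powr (-(real t + 1) / 2)"

definition student_t_density :: "nat \<Rightarrow> real \<Rightarrow> real" where
  "student_t_density t y = Gamma ((real t + 1) / 2) / (sqrt (real t * pi) * Gamma (real t / 2))
      * (1 + y\<^sup>2 / real t) powr (-(real t + 1) / 2)"

definition student_t :: "nat \<Rightarrow> real measure" where
  "student_t t = density lborel (\<lambda>y. ennreal (student_t_density t y))"

definition h_fun :: "nat \<Rightarrow> real \<Rightarrow> real" where
  "h_fun t a = sqrt (a\<^sup>2 / ((1 + a\<^sup>2 / real t) powr (real t / (real t + 1)) - 1) - real t)"

definition p_min :: "nat \<Rightarrow> real \<Rightarrow> real \<Rightarrow> real" where
  "p_min t a y = (if \<bar>y\<bar> \<le> h_fun t a then gibbs_p t a y else gibbs_p t 0 y)"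

definition beta_const :: "nat \<Rightarrow> real \<Rightarrow> real" where
  "beta_const t a = 1 - measure (student_t t) {y. \<bar>y\<bar> \<le> h_fun t a}
      + measure (student_t t) {y. \<bar>y\<bar> \<le> (1 + a\<^sup>2 / real t) powr (-1/2) * h_fun t a}"

definition gibbs_kernel :: "nat \<Rightarrow> real \<Rightarrow> real measure" where
  "gibbs_kernel t x = density lborel (\<lambda>y. ennreal (gibbs_p t x y))"

definition nu_meas :: "nat \<Rightarrow> real \<Rightarrow> real measure" where
  "nu_meas t a = density lborel (\<lambda>y. ennreal (p_min t a y / beta_const t a))"

end

theory Submission
  imports Defs
begin

text \<open>Writing w = x^2/t and v = y^2/t, the density p(y | x) is, up to the constant, the
  exponential of t/2 ln(1 + w) - (t+1)/2 ln(1 + w + v).  As a function of w this increases up to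
  w = t v - 1 and decreases afterwards, so over 0 \<le> w \<le> a^2/t it is smallest at an endpoint:
  p(y | x) \<ge> min (p(y | 0), p(y | a)) for |x| \<le> a.  Which endpoint is smaller is decided by
  comparing |y| with h(a), which gives p_min.  The mass of p_min is beta: on |y| > h(a) it is a
  Student t tail, and on |y| \<le> h(a) the density p(\<cdot> | a) is a Student t density rescaled by
  (1 + a^2/t)^(1/2).  The normalisation of the Student t density is obtained by writing its kernel
  as a Gamma mixture of Gaussians and applying Fubini.\<close>

lemma nn_integral_powr_exp_scaled:
  fixes s l :: real
  assumes s: "s > 0" and l: "l > 0"
  shows "(\<integral>\<^sup>+x. ennreal (indicator {0..} x * x powr (s - 1) * exp (-(l * x))) \<partial>lborel)
     = ennreal (Gamma s / l powr s)"
proof -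
  have "ennreal (Gamma s) = (\<integral>\<^sup>+x. ennreal (indicator {0..} x * x powr (s - 1) / exp x) \<partial>lborel)"
    using Gamma_conv_nn_integral_real[OF s] by simp
  also have "\<dots> = ennreal l * (\<integral>\<^sup>+x. ennreal (indicator {0..} (0 + l*x) * (0 + l*x) powr (s - 1)
                                           / exp (0 + l*x)) \<partial>lborel)"
    using nn_integral_real_affine[of "\<lambda>x. ennreal (indicator {0..} x * x powr (s - 1) / exp x)" l 0] l
    by simp
  also have "(\<lambda>x. ennreal (indicator {0..} (0 + l*x) * (0 + l*x) powr (s - 1) / exp (0 + l*x)))
     = (\<lambda>x. ennreal (l powr (s - 1)) * ennreal (indicator {0..} x * x powr (s - 1) * exp (-(l*x))))"
  proof
    fix x :: real
    show "ennreal (indicator {0..} (0 + l*x) * (0 + l*x) powr (s - 1) / exp (0 + l*x))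
      = ennreal (l powr (s - 1)) * ennreal (indicator {0..} x * x powr (s - 1) * exp (-(l*x)))"
    proof (cases "x \<ge> 0")
      case True
      have "(l*x) powr (s - 1) = l powr (s - 1) * x powr (s - 1)" using True l by (simp add: powr_mult)
      then show ?thesis using True l
        by (simp add: ennreal_mult'[symmetric] zero_le_mult_iff exp_minus field_simps)
    next
      case False
      then have "\<not> 0 \<le> l*x" using l by (simp add: zero_le_mult_iff)
      then show ?thesis using False by (simp add: indicator_def)
    qed
  qed
  also have "ennreal l * (\<integral>\<^sup>+x. ennreal (l powr (s - 1))
               * ennreal (indicator {0..} x * x powr (s - 1) * exp (-(l*x))) \<partial>lborel)
    = ennreal (l * l powr (s - 1))
        * (\<integral>\<^sup>+x. ennreal (indicator {0..} x * x powr (s - 1) * exp (-(l*x))) \<partial>lborel)"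
    using l by (simp add: nn_integral_cmult ennreal_mult mult.assoc)
  also have "l * l powr (s - 1) = l powr s" using l by (simp add: powr_diff)
  finally have Gamma_eq: "ennreal (Gamma s) = ennreal (l powr s)
      * (\<integral>\<^sup>+x. ennreal (indicator {0..} x * x powr (s - 1) * exp (-(l*x))) \<partial>lborel)" .
  have "ennreal (Gamma s / l powr s) = ennreal (1 / l powr s) * ennreal (Gamma s)"
    using l by (simp add: ennreal_mult'[symmetric])
  also have "\<dots> = (\<integral>\<^sup>+x. ennreal (indicator {0..} x * x powr (s - 1) * exp (-(l*x))) \<partial>lborel)"
    unfolding Gamma_eq using l
    by (simp add: ennreal_mult'[symmetric] mult.assoc[symmetric] flip: ennreal_mult)
  finally show ?thesis by simp
qed

lemma nn_integral_exp_neg_square: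
  fixes c :: real
  assumes c: "c > 0"
  shows "(\<integral>\<^sup>+y. ennreal (exp (-(c * y\<^sup>2))) \<partial>lborel) = ennreal (sqrt (pi / c))"
proof -
  define \<sigma> where "\<sigma> = sqrt (1 / (2 * c))"
  have \<sigma>_sq: "\<sigma>\<^sup>2 = 1 / (2 * c)" using c by (simp add: \<sigma>_def)
  have eq: "(\<lambda>y. ennreal (exp (-(c * y\<^sup>2))))
      = (\<lambda>y. ennreal (sqrt (pi / c)) * ennreal (normal_density 0 \<sigma> y))"
  proof
    fix y
    have "normal_density 0 \<sigma> y = 1 / sqrt (pi / c) * exp (-(c * y\<^sup>2))"
      unfolding normal_density_def \<sigma>_sq using c by (simp add: field_simps)
    then show "ennreal (exp (-(c * y\<^sup>2))) = ennreal (sqrt (pi / c)) * ennreal (normal_density 0 \<sigma> y)"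
      using c by (simp add: ennreal_mult'[symmetric])
  qed
  have "(\<integral>\<^sup>+y. ennreal (normal_density 0 \<sigma> y) \<partial>lborel) = 1"
    using c by (subst nn_integral_eq_integral) (auto simp: \<sigma>_def)
  then show ?thesis unfolding eq by (simp add: nn_integral_cmult)
qed

text \<open>The Gamma-Gaussian mixture: integrating out x gives the Student t kernel in y,
  integrating out y gives the Gamma integrand in x.\<close>
definition student_t_mixture :: "real \<Rightarrow> real \<Rightarrow> real \<Rightarrow> real" where
  "student_t_mixture \<nu> x y =
     indicator {0..} x * x powr ((\<nu> + 1) / 2 - 1) * exp (-((1 + y\<^sup>2 / \<nu>) * x))"

lemma student_t_mixture_measurable[measurable]:
  "case_prod (student_t_mixture \<nu>) \<in> borel_measurable (lborel \<Otimes>\<^sub>M lborel)"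
  unfolding student_t_mixture_def by measurable

lemma nn_integral_student_t_mixture_fst:
  fixes \<nu> :: real
  assumes \<nu>: "\<nu> > 0"
  shows "(\<integral>\<^sup>+x. ennreal (student_t_mixture \<nu> x y) \<partial>lborel)
     = ennreal (Gamma ((\<nu> + 1) / 2)) * ennreal ((1 + y\<^sup>2 / \<nu>) powr (-(\<nu> + 1) / 2))"
proof -
  define s where "s = (\<nu> + 1) / 2"
  have s: "s > 0" using \<nu> by (simp add: s_def)
  have l: "1 + y\<^sup>2 / \<nu> > 0" using \<nu> by (simp add: add_pos_nonneg)
  have exponent: "-(\<nu> + 1) / 2 = -s" by (simp add: s_def field_simps)
  have "(\<integral>\<^sup>+x. ennreal (student_t_mixture \<nu> x y) \<partial>lborel) = ennreal (Gamma s / (1 + y\<^sup>2 / \<nu>) powr s)"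
    unfolding student_t_mixture_def s_def[symmetric] by (rule nn_integral_powr_exp_scaled[OF s l])
  also have "Gamma s / (1 + y\<^sup>2 / \<nu>) powr s = Gamma s * (1 + y\<^sup>2 / \<nu>) powr (-(\<nu> + 1) / 2)"
    unfolding exponent by (simp add: powr_minus divide_inverse)
  finally show ?thesis
    unfolding s_def[symmetric] by (simp add: ennreal_mult'')
qed

lemma nn_integral_student_t_mixture_snd:
  fixes \<nu> :: real
  assumes \<nu>: "\<nu> > 0"
  shows "(\<integral>\<^sup>+y. ennreal (student_t_mixture \<nu> x y) \<partial>lborel)
     = ennreal (sqrt (\<nu> * pi) * (indicator {0..} x * x powr (\<nu> / 2 - 1) / exp x))"
proof (cases "x > 0")
  case False
  then have "x < 0 \<or> x = 0" by auto
  then show ?thesis by (auto simp: student_t_mixture_def indicator_def)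
next
  case True
  have c: "x / \<nu> > 0" using True \<nu> by simp
  have split: "ennreal (student_t_mixture \<nu> x y)
      = ennreal (x powr ((\<nu> + 1) / 2 - 1) * exp (-x)) * ennreal (exp (-((x / \<nu>) * y\<^sup>2)))" for y
  proof -
    have "-((1 + y\<^sup>2 / \<nu>) * x) = -x + (-((x / \<nu>) * y\<^sup>2))" by (simp add: field_simps)
    then have "exp (-((1 + y\<^sup>2 / \<nu>) * x)) = exp (-x) * exp (-((x / \<nu>) * y\<^sup>2))"
      by (metis exp_add)
    then show ?thesis
      using True by (simp add: student_t_mixture_def ennreal_mult'[symmetric] mult.assoc)
  qed
  have "(\<integral>\<^sup>+y. ennreal (student_t_mixture \<nu> x y) \<partial>lborel)
      = ennreal (x powr ((\<nu> + 1) / 2 - 1) * exp (-x)) * ennreal (sqrt (pi / (x / \<nu>)))"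
    unfolding split nn_integral_exp_neg_square[OF c, symmetric] by (rule nn_integral_cmult) measurable
  also have "\<dots> = ennreal (x powr ((\<nu> + 1) / 2 - 1) * exp (-x) * sqrt (pi / (x / \<nu>)))"
    using True by (simp add: ennreal_mult'[symmetric])
  also have "x powr ((\<nu> + 1) / 2 - 1) * exp (-x) * sqrt (pi / (x / \<nu>))
      = sqrt (\<nu> * pi) * (indicator {0..} x * x powr (\<nu> / 2 - 1) / exp x)"
  proof -
    have "sqrt (pi / (x / \<nu>)) = sqrt (\<nu> * pi) / x powr (1/2)"
      using True \<nu> by (simp add: powr_half_sqrt real_sqrt_divide real_sqrt_mult field_simps)
    moreover have "x powr ((\<nu> + 1) / 2 - 1) / x powr (1/2) = x powr (\<nu> / 2 - 1)"
    proof -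
      have "x powr ((\<nu> + 1) / 2 - 1) / x powr (1/2) = x powr ((\<nu> + 1) / 2 - 1 - 1/2)"
        by (rule powr_diff[symmetric])
      also have "(\<nu> + 1) / 2 - 1 - 1/2 = \<nu> / 2 - 1" by (simp add: field_simps)
      finally show ?thesis .
    qed
    ultimately show ?thesis
      using True by (simp add: exp_minus field_simps)
  qed
  finally show ?thesis .
qed

lemma nn_integral_student_t_kernel:
  fixes \<nu> :: real
  assumes \<nu>: "\<nu> > 0"
  shows "(\<integral>\<^sup>+y. ennreal ((1 + y\<^sup>2 / \<nu>) powr (-(\<nu> + 1) / 2)) \<partial>lborel)
     = ennreal (sqrt (\<nu> * pi) * Gamma (\<nu> / 2) / Gamma ((\<nu> + 1) / 2))"
    (is "?I = _")
proof -
  define G where "G = Gamma ((\<nu> + 1) / 2)"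
  have G: "G > 0" unfolding G_def using \<nu> by (simp add: Gamma_real_pos)
  have "ennreal G * ?I = (\<integral>\<^sup>+y. (\<integral>\<^sup>+x. ennreal (student_t_mixture \<nu> x y) \<partial>lborel) \<partial>lborel)"
    unfolding nn_integral_student_t_mixture_fst[OF \<nu>] G_def by (simp add: nn_integral_cmult)
  also have "\<dots> = (\<integral>\<^sup>+x. (\<integral>\<^sup>+y. ennreal (student_t_mixture \<nu> x y) \<partial>lborel) \<partial>lborel)"
    by (rule lborel_pair.Fubini') measurable
  also have "\<dots> = (\<integral>\<^sup>+x. ennreal (sqrt (\<nu> * pi))
                        * ennreal (indicator {0..} x * x powr (\<nu> / 2 - 1) / exp x) \<partial>lborel)"
    unfolding nn_integral_student_t_mixture_snd[OF \<nu>]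
    by (intro nn_integral_cong ennreal_mult') (use \<nu> in simp)
  also have "\<dots> = ennreal (sqrt (\<nu> * pi)) * ennreal (Gamma (\<nu> / 2))"
    using Gamma_conv_nn_integral_real[of "\<nu> / 2"] \<nu> by (simp add: nn_integral_cmult)
  finally have G_I: "ennreal G * ?I = ennreal (sqrt (\<nu> * pi) * Gamma (\<nu> / 2))"
    using \<nu> by (simp add: ennreal_mult Gamma_real_pos)
  have "?I = ennreal (1 / G) * (ennreal G * ?I)"
    using G by (simp add: mult.assoc[symmetric] ennreal_mult[symmetric])
  also have "\<dots> = ennreal (sqrt (\<nu> * pi) * Gamma (\<nu> / 2) / G)"
    unfolding G_I using G \<nu> by (simp add: ennreal_mult[symmetric] Gamma_real_pos)
  finally show ?thesis unfolding G_def .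
qed

definition log_gibbs_kernel :: "real \<Rightarrow> real \<Rightarrow> real \<Rightarrow> real" where
  "log_gibbs_kernel T v w = T / 2 * ln (1 + w) - (T + 1) / 2 * ln (1 + w + v)"

lemma exp_log_gibbs_kernel:
  assumes "v \<ge> 0" and "w \<ge> 0"
  shows "exp (log_gibbs_kernel T v w) = (1 + w) powr (T / 2) * (1 + w + v) powr (-(T + 1) / 2)"
proof -
  have "log_gibbs_kernel T v w = T / 2 * ln (1 + w) + -(T + 1) / 2 * ln (1 + w + v)"
    unfolding log_gibbs_kernel_def
    by (simp only: minus_divide_left[symmetric] mult_minus_left diff_conv_add_uminus)
  then show ?thesis using assms by (simp add: powr_def exp_add)
qed

lemma log_gibbs_kernel_has_real_derivative:
  assumes v: "v \<ge> 0" and w: "w \<ge> 0"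
  shows "(log_gibbs_kernel T v has_real_derivative (T * v - 1 - w) / (2 * (1 + w) * (1 + w + v))) (at w)"
proof -
  have "(log_gibbs_kernel T v has_real_derivative T / 2 * (1 / (1 + w)) - (T + 1) / 2 * (1 / (1 + w + v))) (at w)"
    unfolding log_gibbs_kernel_def using w v by (auto intro!: derivative_eq_intros simp: field_simps)
  moreover have "T / 2 * (1 / b) - (T + 1) / 2 * (1 / c) = (T * (c - b) - b) / (2 * b * c)"
    if "b \<noteq> 0" "c \<noteq> 0" for b c :: real
    using that by (simp add: field_simps)
  from this[of "1 + w" "1 + w + v"] w v
  have "T / 2 * (1 / (1 + w)) - (T + 1) / 2 * (1 / (1 + w + v))
      = (T * v - 1 - w) / (2 * (1 + w) * (1 + w + v))"
    by (simp add: algebra_simps)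
  ultimately show ?thesis by simp
qed

lemma log_gibbs_kernel_min_endpoints:
  assumes v: "v \<ge> 0" and u: "0 \<le> u" "u \<le> A"
  shows "min (log_gibbs_kernel T v 0) (log_gibbs_kernel T v A) \<le> log_gibbs_kernel T v u"
proof (cases "u \<le> T * v - 1")
  case True
  have "log_gibbs_kernel T v 0 \<le> log_gibbs_kernel T v u"
  proof (rule DERIV_nonneg_imp_nondecreasing[OF u(1)])
    fix w assume w: "0 \<le> w" "w \<le> u"
    have "(T * v - 1 - w) / (2 * (1 + w) * (1 + w + v)) \<ge> 0"
      using w True v by simp
    with log_gibbs_kernel_has_real_derivative[OF v w(1)]
    show "\<exists>y. (log_gibbs_kernel T v has_real_derivative y) (at w) \<and> y \<ge> 0" by blast
  qed
  then show ?thesis by simp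
next
  case False
  have "log_gibbs_kernel T v A \<le> log_gibbs_kernel T v u"
  proof (rule DERIV_nonpos_imp_nonincreasing[OF u(2)])
    fix w assume w: "u \<le> w" "w \<le> A"
    then have "0 \<le> w" "T * v - 1 - w \<le> 0" using u False by linarith+
    moreover have "2 * (1 + w) * (1 + w + v) > 0" using \<open>0 \<le> w\<close> v by (simp add: add_pos_nonneg)
    ultimately have "(T * v - 1 - w) / (2 * (1 + w) * (1 + w + v)) \<le> 0"
      by (simp add: divide_nonpos_pos)
    with log_gibbs_kernel_has_real_derivative[OF v \<open>0 \<le> w\<close>]
    show "\<exists>y. (log_gibbs_kernel T v has_real_derivative y) (at w) \<and> y \<le> 0" by blast
  qed
  then show ?thesis by simp
qed

lemma log_gibbs_kernel_le_at_zero_iff: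
  assumes T: "T > 0" and v: "v \<ge> 0" and A: "A > 0"
  defines "P \<equiv> (1 + A) powr (T / (T + 1))"
  shows "log_gibbs_kernel T v A \<le> log_gibbs_kernel T v 0 \<longleftrightarrow> v \<le> A / (P - 1) - 1"
proof -
  have P: "P > 1" unfolding P_def by (rule gr_one_powr) (use A T in auto)
  have "log_gibbs_kernel T v A \<le> log_gibbs_kernel T v 0
      \<longleftrightarrow> T / (T + 1) * ln (1 + A) + ln (1 + v) \<le> ln (1 + A + v)"
  proof -
    have "log_gibbs_kernel T v A \<le> log_gibbs_kernel T v 0
        \<longleftrightarrow> 2 / (T + 1) * (T / 2 * ln (1 + A)) + ln (1 + v) \<le> ln (1 + A + v)"
      unfolding log_gibbs_kernel_def using T by (simp add: field_simps)
    also have "2 / (T + 1) * (T / 2 * ln (1 + A)) = T / (T + 1) * ln (1 + A)"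
      using T by (simp add: field_simps)
    finally show ?thesis .
  qed
  also have "\<dots> \<longleftrightarrow> ln (P * (1 + v)) \<le> ln (1 + A + v)"
    using P v A by (simp add: ln_mult P_def ln_powr)
  also have "\<dots> \<longleftrightarrow> P * (1 + v) \<le> 1 + A + v"
    using P v A by (intro ln_le_cancel_iff) auto
  also have "\<dots> \<longleftrightarrow> v \<le> A / (P - 1) - 1"
    using P by (simp add: field_simps)
  finally show ?thesis .
qed

lemma h_fun_radicand_nonneg:
  fixes T A :: real
  assumes T: "T > 0" and A: "A > 0"
  shows "A / ((1 + A) powr (T / (T + 1)) - 1) - 1 \<ge> 0"
proof -
  define P where "P = (1 + A) powr (T / (T + 1))"
  have "P > 1" unfolding P_def by (rule gr_one_powr) (use A T in auto)
  moreover have "P \<le> (1 + A) powr 1" unfolding P_def using A T by (intro powr_mono) auto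
  ultimately show ?thesis unfolding P_def[symmetric] using A by (simp add: field_simps)
qed

lemma powr_minus_half: "x \<ge> 0 \<Longrightarrow> x powr - (1/2) = 1 / sqrt (x :: real)"
  using powr_minus_divide[of x "1/2"] by (simp add: powr_half_sqrt)

lemma gibbs_const_eq:
  assumes t: "t \<ge> 1"
  shows "gibbs_const t = Gamma ((real t + 1) / 2) / (sqrt (real t * pi) * Gamma (real t / 2))"
proof -
  have t_pos: "real t > 0" using t by simp
  have "(\<integral>y. (1 + y\<^sup>2 / real t) powr (-(real t + 1) / 2) \<partial>lborel)
      = enn2real (\<integral>\<^sup>+y. ennreal ((1 + y\<^sup>2 / real t) powr (-(real t + 1) / 2)) \<partial>lborel)"
    by (rule integral_eq_nn_integral) auto
  also have "\<dots> = sqrt (real t * pi) * Gamma (real t / 2) / Gamma ((real t + 1) / 2)"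
    using t unfolding nn_integral_student_t_kernel[OF t_pos] by (simp add: Gamma_real_pos)
  finally show ?thesis unfolding gibbs_const_def by simp
qed

lemma gibbs_const_pos: "t \<ge> 1 \<Longrightarrow> gibbs_const t > 0"
  by (simp add: gibbs_const_eq Gamma_real_pos)

lemma student_t_density_eq:
  "t \<ge> 1 \<Longrightarrow> student_t_density t y = gibbs_const t * (1 + y\<^sup>2 / real t) powr (-(real t + 1) / 2)"
  unfolding student_t_density_def by (simp add: gibbs_const_eq)

lemma gibbs_p_eq_scaled_student_t:
  assumes t: "t \<ge> 1"
  shows "gibbs_p t x y
    = student_t_density t (y / sqrt (1 + x\<^sup>2 / real t)) / sqrt (1 + x\<^sup>2 / real t)"
proof -
  define B where "B = 1 + x\<^sup>2 / real t"
  have B: "B \<ge> 1" unfolding B_def by simp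
  have "1 + x\<^sup>2 / real t + y\<^sup>2 / real t = B + y\<^sup>2 / real t" by (simp add: B_def)
  also have "\<dots> = B * (1 + (y\<^sup>2 / B) / real t)" using B by (simp add: field_simps)
  also have "y\<^sup>2 / B = (y / sqrt B)\<^sup>2" using B by (simp add: power_divide)
  finally have eq: "1 + x\<^sup>2 / real t + y\<^sup>2 / real t = B * (1 + (y / sqrt B)\<^sup>2 / real t)" .
  have "gibbs_p t x y = gibbs_const t * (B powr (real t / 2) * B powr (-(real t + 1) / 2))
        * (1 + (y / sqrt B)\<^sup>2 / real t) powr (-(real t + 1) / 2)"
    unfolding gibbs_p_def eq using B by (subst powr_mult) (auto simp: B_def[symmetric])
  also have "B powr (real t / 2) * B powr (-(real t + 1) / 2) = B powr (-1/2)"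
    by (simp add: powr_add[symmetric] field_simps)
  also have "\<dots> = 1 / sqrt B"
    using B by (simp add: powr_minus_half)
  finally show ?thesis unfolding B_def[symmetric] student_t_density_eq[OF t] by simp
qed

lemma gibbs_p_zero: "t \<ge> 1 \<Longrightarrow> gibbs_p t 0 y = student_t_density t y"
  using gibbs_p_eq_scaled_student_t[of t 0 y] by simp

lemma gibbs_p_pos:
  assumes "t \<ge> 1"
  shows "gibbs_p t x y > 0"
proof -
  have "0 < 1 + x\<^sup>2 / real t" and "0 < 1 + x\<^sup>2 / real t + y\<^sup>2 / real t"
    by (intro add_pos_nonneg; simp)+
  then show ?thesis
    unfolding gibbs_p_def using gibbs_const_pos[OF assms] by simp
qed

lemma p_min_pos: "t \<ge> 1 \<Longrightarrow> p_min t a y > 0"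
  unfolding p_min_def using gibbs_p_pos by simp

lemma gibbs_p_measurable[measurable]: "gibbs_p t x \<in> borel_measurable borel"
  unfolding gibbs_p_def[abs_def] by measurable

lemma p_min_measurable[measurable]: "p_min t a \<in> borel_measurable borel"
  unfolding p_min_def[abs_def] by measurable

lemma student_t_density_measurable[measurable]: "student_t_density t \<in> borel_measurable borel"
  unfolding student_t_density_def[abs_def] by measurable

lemma gibbs_p_eq_exp_log_gibbs_kernel:
  "t \<ge> 1 \<Longrightarrow> gibbs_p t x y
     = gibbs_const t * exp (log_gibbs_kernel (real t) (y\<^sup>2 / real t) (x\<^sup>2 / real t))"
  unfolding gibbs_p_def by (simp add: exp_log_gibbs_kernel mult.assoc)

lemma abs_le_h_fun_iff:
  assumes t: "t \<ge> 1" and a: "a > 0"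
  shows "\<bar>y\<bar> \<le> h_fun t a
    \<longleftrightarrow> log_gibbs_kernel (real t) (y\<^sup>2 / real t) (a\<^sup>2 / real t)
        \<le> log_gibbs_kernel (real t) (y\<^sup>2 / real t) 0"
proof -
  define T A where "T = real t" and "A = a\<^sup>2 / T"
  define m where "m = A / ((1 + A) powr (T / (T + 1)) - 1) - 1"
  have T: "T > 0" and A: "A > 0" using t a by (simp_all add: T_def A_def)
  have m: "m \<ge> 0" unfolding m_def by (rule h_fun_radicand_nonneg[OF T A])
  have "T * (A / ((1 + A) powr (T / (T + 1)) - 1)) = a\<^sup>2 / ((1 + A) powr (T / (T + 1)) - 1)"
    using T unfolding A_def by simp
  then have "h_fun t a = sqrt (T * m)"
    unfolding h_fun_def m_def right_diff_distrib by (simp add: T_def A_def)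
  then have "\<bar>y\<bar> \<le> h_fun t a \<longleftrightarrow> y\<^sup>2 \<le> T * m"
    by (metis abs_ge_zero real_sqrt_abs real_sqrt_le_iff)
  also have "\<dots> \<longleftrightarrow> y\<^sup>2 / T \<le> m"
    using T by (simp add: pos_divide_le_eq mult.commute)
  also have "\<dots> \<longleftrightarrow> log_gibbs_kernel T (y\<^sup>2 / T) A \<le> log_gibbs_kernel T (y\<^sup>2 / T) 0"
    unfolding m_def using log_gibbs_kernel_le_at_zero_iff[OF T _ A] T by simp
  finally show ?thesis unfolding T_def A_def .
qed

lemma p_min_le_gibbs_p:
  assumes t: "t \<ge> 1" and a: "a > 0" and x: "\<bar>x\<bar> \<le> a"
  shows "p_min t a y \<le> gibbs_p t x y"
proof -
  define L where "L = log_gibbs_kernel (real t) (y\<^sup>2 / real t)"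
  have "x\<^sup>2 \<le> a\<^sup>2" using x a abs_le_square_iff[of x a] by simp
  then have "0 \<le> x\<^sup>2 / real t" "x\<^sup>2 / real t \<le> a\<^sup>2 / real t" by (auto intro: divide_right_mono)
  then have "min (L 0) (L (a\<^sup>2 / real t)) \<le> L (x\<^sup>2 / real t)"
    unfolding L_def by (intro log_gibbs_kernel_min_endpoints) auto
  moreover have "gibbs_p t z y = gibbs_const t * exp (L (z\<^sup>2 / real t))" for z
    unfolding L_def by (rule gibbs_p_eq_exp_log_gibbs_kernel[OF t])
  moreover have "\<bar>y\<bar> \<le> h_fun t a \<longleftrightarrow> L (a\<^sup>2 / real t) \<le> L 0"
    unfolding L_def using abs_le_h_fun_iff[OF t a] by simp
  ultimately show ?thesis
    unfolding p_min_def using gibbs_const_pos[OF t] by (auto simp: min_def split: if_splits)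
qed

lemma prob_space_student_t:
  assumes t: "t \<ge> 1"
  shows "prob_space (student_t t)"
proof (rule prob_spaceI)
  have t_pos: "real t > 0" using t by simp
  have "emeasure (student_t t) (space (student_t t)) = (\<integral>\<^sup>+y. ennreal (student_t_density t y) \<partial>lborel)"
    unfolding student_t_def by (simp add: emeasure_density)
  also have "\<dots> = (\<integral>\<^sup>+y. ennreal (gibbs_const t)
                        * ennreal ((1 + y\<^sup>2 / real t) powr (-(real t + 1) / 2)) \<partial>lborel)"
    using gibbs_const_pos[OF t]
    by (intro nn_integral_cong) (simp add: student_t_density_eq[OF t] ennreal_mult)
  also have "\<dots> = ennreal (gibbs_const t)
      * ennreal (sqrt (real t * pi) * Gamma (real t / 2) / Gamma ((real t + 1) / 2))"
    unfolding nn_integral_student_t_kernel[OF t_pos, symmetric] by (rule nn_integral_cmult) measurable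
  also have "\<dots> = 1"
  proof -
    have "Gamma (real t / 2) > 0" "Gamma ((real t + 1) / 2) > 0"
      using t by (simp_all add: Gamma_real_pos)
    then have "Gamma (real t / 2) \<noteq> 0" "Gamma ((real t + 1) / 2) \<noteq> 0"
      by linarith+
    then show ?thesis using t by (simp add: gibbs_const_eq ennreal_mult[symmetric])
  qed
  finally show "emeasure (student_t t) (space (student_t t)) = 1" .
qed

lemma nn_integral_rescaled_abs_le:
  fixes f :: "real \<Rightarrow> real" and r h :: real
  assumes f[measurable]: "f \<in> borel_measurable borel" and r: "r > 0"
  shows "(\<integral>\<^sup>+y. ennreal (f (y / r) / r) * indicator {y. \<bar>y\<bar> \<le> h} y \<partial>lborel)
       = (\<integral>\<^sup>+z. ennreal (f z) * indicator {z. \<bar>z\<bar> \<le> h / r} z \<partial>lborel)"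
proof -
  have "(\<integral>\<^sup>+y. ennreal (f (y / r) / r) * indicator {y. \<bar>y\<bar> \<le> h} y \<partial>lborel)
      = ennreal \<bar>r\<bar> * (\<integral>\<^sup>+z. ennreal (f ((0 + r * z) / r) / r)
                                 * indicator {y. \<bar>y\<bar> \<le> h} (0 + r * z) \<partial>lborel)"
    by (rule nn_integral_real_affine) (use r in auto)
  also have "\<dots> = (\<integral>\<^sup>+z. ennreal r * (ennreal (f ((0 + r * z) / r) / r)
                                 * indicator {y. \<bar>y\<bar> \<le> h} (0 + r * z)) \<partial>lborel)"
    using r by (subst nn_integral_cmult) auto
  also have "\<dots> = (\<integral>\<^sup>+z. ennreal (f z) * indicator {z. \<bar>z\<bar> \<le> h / r} z \<partial>lborel)"
  proof (intro nn_integral_cong)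
    fix z
    have "(0 + r * z) / r = z" using r by simp
    moreover have "ennreal r * ennreal (f z / r) = ennreal (f z)"
      using r by (simp add: ennreal_mult'[symmetric])
    moreover have "\<bar>0 + r * z\<bar> \<le> h \<longleftrightarrow> \<bar>z\<bar> \<le> h / r"
      using r by (simp add: abs_mult pos_le_divide_eq mult.commute)
    ultimately show "ennreal r * (ennreal (f ((0 + r * z) / r) / r) * indicator {y. \<bar>y\<bar> \<le> h} (0 + r * z))
        = ennreal (f z) * indicator {z. \<bar>z\<bar> \<le> h / r} z"
      unfolding indicator_def by (simp only: mem_Collect_eq) (simp add: mult.assoc[symmetric])
  qed
  finally show ?thesis .
qed

lemma ennreal_p_min_split:
  fixes t :: nat and a y :: real
  assumes t: "t \<ge> 1"
  defines "r \<equiv> sqrt (1 + a\<^sup>2 / real t)" and "h \<equiv> h_fun t a"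
  shows "ennreal (p_min t a y)
      = ennreal (student_t_density t (y / r) / r) * indicator {y. \<bar>y\<bar> \<le> h} y
        + ennreal (student_t_density t y) * indicator {y. h < \<bar>y\<bar>} y"
proof -
  have "gibbs_p t a y = student_t_density t (y / r) / r"
    unfolding r_def by (rule gibbs_p_eq_scaled_student_t[OF t])
  then show ?thesis
    by (cases "\<bar>y\<bar> \<le> h") (simp_all add: p_min_def gibbs_p_zero[OF t] h_def)
qed

lemma nn_integral_p_min:
  assumes t: "t \<ge> 1" and a: "a > 0"
  shows "(\<integral>\<^sup>+y. ennreal (p_min t a y) \<partial>lborel) = ennreal (beta_const t a)"
proof -
  interpret student: prob_space "student_t t" by (rule prob_space_student_t[OF t])
  define h r where "h = h_fun t a" and "r = sqrt (1 + a\<^sup>2 / real t)"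
  have r: "r > 0" by (simp add: r_def add_pos_nonneg)
  have [measurable]: "{y::real. \<bar>y\<bar> \<le> c} \<in> sets borel" for c by measurable
  have [measurable]: "{y::real. c < \<bar>y\<bar>} \<in> sets borel" for c by measurable
  have space: "space (student_t t) = UNIV" and sets: "sets (student_t t) = sets borel"
    by (simp_all add: student_t_def)
  have emeasure_student_t: "emeasure (student_t t) S
      = (\<integral>\<^sup>+y. ennreal (student_t_density t y) * indicator S y \<partial>lborel)" if "S \<in> sets borel" for S
    using that unfolding student_t_def by (simp add: emeasure_density)
  note split = ennreal_p_min_split[OF t, of a, folded r_def h_def]
  have "(\<integral>\<^sup>+y. ennreal (p_min t a y) \<partial>lborel)
      = (\<integral>\<^sup>+y. ennreal (student_t_density t (y / r) / r) * indicator {y. \<bar>y\<bar> \<le> h} y \<partial>lborel)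
        + (\<integral>\<^sup>+y. ennreal (student_t_density t y) * indicator {y. h < \<bar>y\<bar>} y \<partial>lborel)"
    unfolding split by (rule nn_integral_add) auto
  also have "\<dots> = emeasure (student_t t) {y. \<bar>y\<bar> \<le> h / r} + emeasure (student_t t) {y. h < \<bar>y\<bar>}"
    unfolding nn_integral_rescaled_abs_le[OF student_t_density_measurable r]
    by (simp add: emeasure_student_t)
  finally have integral_eq: "(\<integral>\<^sup>+y. ennreal (p_min t a y) \<partial>lborel)
      = emeasure (student_t t) {y. \<bar>y\<bar> \<le> h / r} + emeasure (student_t t) {y. h < \<bar>y\<bar>}" .
  have "{y. h < \<bar>y\<bar>} = space (student_t t) - {y. \<bar>y\<bar> \<le> h}"
    by (auto simp: space)
  then have tail: "measure (student_t t) {y. h < \<bar>y\<bar>} = 1 - measure (student_t t) {y. \<bar>y\<bar> \<le> h}"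
    using student.prob_compl[of "{y. \<bar>y\<bar> \<le> h}"] by (simp add: sets)
  have "(1 + a\<^sup>2 / real t) powr (-1/2) * h = h / r"
    by (simp add: r_def powr_minus_half)
  then have "beta_const t a = measure (student_t t) {y. \<bar>y\<bar> \<le> h / r} + measure (student_t t) {y. h < \<bar>y\<bar>}"
    unfolding beta_const_def h_def[symmetric] tail by simp
  then show ?thesis
    unfolding integral_eq student.emeasure_eq_measure by (simp add: ennreal_plus)
qed

lemma beta_const_pos:
  assumes t: "t \<ge> 1" and a: "a > 0"
  shows "beta_const t a > 0"
proof (rule ccontr)
  assume "\<not> beta_const t a > 0"
  then have "(\<integral>\<^sup>+y. ennreal (p_min t a y) \<partial>lborel) = 0"
    using nn_integral_p_min[OF t a] by (simp add: ennreal_eq_0_iff)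
  then have "AE y in lborel. ennreal (p_min t a y) = 0"
    by (simp add: nn_integral_0_iff_AE)
  then have "AE (y::real) in lborel. False"
    by (rule AE_mp) (use p_min_pos[OF t, of a] in \<open>auto intro!: AE_I2 simp: ennreal_eq_0_iff not_le\<close>)
  then have "ae_filter (lborel :: real measure) = bot"
    by (simp add: trivial_limit_def)
  then show False by (simp add: ae_filter_eq_bot_iff)
qed

lemma beta_const_mult_nu_meas:
  assumes t: "t \<ge> 1" and a: "a > 0" and A: "A \<in> sets borel"
  shows "ennreal (beta_const t a) * emeasure (nu_meas t a) A
    = (\<integral>\<^sup>+y. ennreal (p_min t a y) * indicator A y \<partial>lborel)"
proof -
  have \<beta>: "beta_const t a > 0" by (rule beta_const_pos[OF t a])
  have "ennreal (beta_const t a) * emeasure (nu_meas t a) A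
      = (\<integral>\<^sup>+y. ennreal (beta_const t a) * (ennreal (p_min t a y / beta_const t a) * indicator A y) \<partial>lborel)"
    using A unfolding nu_meas_def by (simp add: emeasure_density nn_integral_cmult)
  also have "\<dots> = (\<integral>\<^sup>+y. ennreal (p_min t a y) * indicator A y \<partial>lborel)"
    using \<beta> p_min_pos[OF t]
    by (intro nn_integral_cong) (simp add: mult.assoc[symmetric] ennreal_mult[symmetric] less_imp_le)
  finally show ?thesis .
qed

lemma prob_space_nu_meas:
  assumes t: "t \<ge> 1" and a: "a > 0"
  shows "prob_space (nu_meas t a)"
proof (rule prob_spaceI)
  have \<beta>: "beta_const t a > 0" by (rule beta_const_pos[OF t a])
  have "ennreal (beta_const t a) * emeasure (nu_meas t a) (space (nu_meas t a))
      = ennreal (beta_const t a) * 1"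
    using beta_const_mult_nu_meas[OF t a, of UNIV] nn_integral_p_min[OF t a] by (simp add: nu_meas_def)
  then show "emeasure (nu_meas t a) (space (nu_meas t a)) = 1"
    using \<beta> by (subst (asm) ennreal_mult_cancel_left) auto
qed

lemma gibbs_kernel_ge_nu_meas:
  assumes t: "t \<ge> 1" and a: "a > 0" and x: "\<bar>x\<bar> \<le> a" and A: "A \<in> sets borel"
  shows "ennreal (beta_const t a) * emeasure (nu_meas t a) A \<le> emeasure (gibbs_kernel t x) A"
proof -
  have "ennreal (beta_const t a) * emeasure (nu_meas t a) A
      = (\<integral>\<^sup>+y. ennreal (p_min t a y) * indicator A y \<partial>lborel)"
    by (rule beta_const_mult_nu_meas[OF t a A])
  also have "\<dots> \<le> (\<integral>\<^sup>+y. ennreal (gibbs_p t x y) * indicator A y \<partial>lborel)"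
    using p_min_le_gibbs_p[OF t a x]
    by (intro nn_integral_mono) (auto simp: indicator_def intro: ennreal_leI)
  also have "\<dots> = emeasure (gibbs_kernel t x) A"
    using A unfolding gibbs_kernel_def by (simp add: emeasure_density)
  finally show ?thesis .
qed

theorem proposition7p2:
  fixes t :: nat and a :: real
  assumes "t \<ge> 1" and "a > 0"
  shows "(\<forall>x y. \<bar>x\<bar> \<le> a \<longrightarrow> gibbs_p t x y \<ge> p_min t a y)
    \<and> prob_space (nu_meas t a)
    \<and> (\<forall>x. \<forall>A \<in> sets borel.
           emeasure (gibbs_kernel t x) A
             \<ge> ennreal (beta_const t a) * indicator {-a..a} x * emeasure (nu_meas t a) A)"
proof (intro conjI allI impI ballI)
  show "p_min t a y \<le> gibbs_p t x y" if "\<bar>x\<bar> \<le> a" for x y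
    using p_min_le_gibbs_p[OF assms that] .
  show "prob_space (nu_meas t a)"
    by (rule prob_space_nu_meas[OF assms])
  fix x :: real and A :: "real set"
  assume "A \<in> sets borel"
  then show "ennreal (beta_const t a) * indicator {-a..a} x * emeasure (nu_meas t a) A
      \<le> emeasure (gibbs_kernel t x) A"
    using gibbs_kernel_ge_nu_meas[OF assms] by (cases "\<bar>x\<bar> \<le> a") (auto simp: abs_le_iff)
qed

end
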